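(* Let $\mathcal M\in\{\mathbb R,\mathbb T\}$, $1\le p,q\le\infty$, $s\in\mathbb R$. For $N\ge2$ and $R>0$ let $\phi_{0,N}$ be defined by $\mathcal F\phi_{0,N}(\xi)=R\chi_{I_N}(\xi)$ ($\xi\in\widehat{\mathcal M}$), $I_N=[-N-1,-N+1]\cup[N-1,N+1]$. Then there exist $T_0>0$, $N_0\ge2$ and $c>0$ such that for all $N\ge N_0$, $R>0$ and $0<T\le T_0$, $$\|U_2[\phi_{0,N}](T)\|_{\widehat w^{p,q}_s}\ \ge\ \big\|\,\|\chi_{n+Q_1}(\xi)\mathcal FU_2[\phi_{0,N}](T)(\xi)\|_{L^p_\xi(\widehat{\mathcal M})}\langle n\rangle^s\big\|_{\ell^q(n=1)}\ \ge\ c\,R^2T,$$ where $\|a_n\|_{\ell^q(n=1)}=|a_1|$.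
   Context: $\widehat{\mathcal M}$ is the dual group ($\mathbb R$, or $\mathbb Z$ for $\mathcal M=\mathbb T$); $\mathcal F$ the Fourier transform; $\langle n\rangle=(1+|n|^2)^{1/2}$; $Q_1=(-\tfrac12,\tfrac12]$; $\|f\|_{\widehat w^{p,q}_s}=\big\|\,\|\chi_{n+Q_1}\mathcal Ff\|_{L^p(\widehat{\mathcal M})}\langle n\rangle^s\big\|_{\ell^q_n(\mathbb Z)}$. With $\varphi(\xi)=\xi/(1+\xi^2)$, $U(t)=\mathcal F^{-1}e^{it\varphi(\xi)}\mathcal F$ and $\mathcal N(u,v)(t)=\int_0^tU(t-\tau)\varphi(D_x)(uv)(\tau)\,d\tau$, the second Picard iterate is $U_2[u_0](t)=-\frac i2\mathcal N(U(\cdot)u_0,U(\cdot)u_0)(t)$. *)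

theory Defs
  imports "HOL-Analysis.Analysis" "HOL-Probability.Essential_Supremum"
begin

datatype manifold = Line | Torus

text \<open>Haar measure on the dual group, realised on real frequencies:
  Lebesgue measure for R, counting measure on the integers for T.\<close>
definition dual_measure :: "manifold \<Rightarrow> real measure" where
  "dual_measure M = (case M of Line \<Rightarrow> lborel | Torus \<Rightarrow> count_space \<int>)"

text \<open>Fourier convention: F f(xi) = integral e^(-i x xi) f(x) dx on R,
  Fourier coefficients (1/(2 pi)) integral_0^(2 pi) e^(-i n x) f(x) dx on T.
  Then F(u v) = kappa * (F u * F v) (convolution over the dual group).\<close>
definition conv_const :: "manifold \<Rightarrow> complex" where
  "conv_const M = (case M of Line \<Rightarrow> 1 / (2 * complex_of_real pi) | Torus \<Rightarrow> 1)"

definition dual_conv :: "manifold \<Rightarrow> (real \<Rightarrow> complex) \<Rightarrow> (real \<Rightarrow> complex) \<Rightarrow> real \<Rightarrow> complex" where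
  "dual_conv M f g \<xi> = conv_const M * (\<integral>\<eta>. f (\<xi> - \<eta>) * g \<eta> \<partial>dual_measure M)"

definition symb :: "real \<Rightarrow> real" where
  "symb \<xi> = \<xi> / (1 + \<xi>\<^sup>2)"

definition U_hat :: "real \<Rightarrow> (real \<Rightarrow> complex) \<Rightarrow> real \<Rightarrow> complex" where
  "U_hat t u0h \<xi> = exp (\<i> * complex_of_real (t * symb \<xi>)) * u0h \<xi>"

text \<open>Fourier transform of N(u,v)(t) = int_0^t U(t-tau) phi(D)(u v)(tau) dtau,
  where u, v are given through their Fourier transforms uh tau, vh tau.\<close>
definition N_hat :: "manifold \<Rightarrow> (real \<Rightarrow> real \<Rightarrow> complex) \<Rightarrow> (real \<Rightarrow> real \<Rightarrow> complex)
    \<Rightarrow> real \<Rightarrow> real \<Rightarrow> complex" where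
  "N_hat M uh vh t \<xi> =
     (LBINT \<tau>=0..t. exp (\<i> * complex_of_real ((t - \<tau>) * symb \<xi>)) * complex_of_real (symb \<xi>)
                      * dual_conv M (uh \<tau>) (vh \<tau>) \<xi>)"

text \<open>Fourier transform of the second Picard iterate U_2[u0](t) = -(i/2) N(U u0, U u0)(t).\<close>
definition U2_hat :: "manifold \<Rightarrow> (real \<Rightarrow> complex) \<Rightarrow> real \<Rightarrow> real \<Rightarrow> complex" where
  "U2_hat M u0h t \<xi> = - (\<i> / 2) * N_hat M (\<lambda>\<tau>. U_hat \<tau> u0h) (\<lambda>\<tau>. U_hat \<tau> u0h) t \<xi>"

definition ennpow :: "ennreal \<Rightarrow> real \<Rightarrow> ennreal" where
  "ennpow x r = (if x = \<infinity> then \<infinity> else ennreal (enn2real x powr r))"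

definition Lp_norm :: "'a measure \<Rightarrow> ennreal \<Rightarrow> ('a \<Rightarrow> ennreal) \<Rightarrow> ennreal" where
  "Lp_norm \<mu> p f = (if p = \<infinity> then esssup \<mu> f
       else ennpow (\<integral>\<^sup>+x. ennpow (f x) (enn2real p) \<partial>\<mu>) (1 / enn2real p))"

definition jbr :: "int \<Rightarrow> real" where
  "jbr n = sqrt (1 + (real_of_int n)\<^sup>2)"

definition Q1 :: "real set" where
  "Q1 = {-1/2<..1/2}"

definition wpiece :: "manifold \<Rightarrow> ennreal \<Rightarrow> real \<Rightarrow> (real \<Rightarrow> complex) \<Rightarrow> int \<Rightarrow> ennreal" where
  "wpiece M p s fh n =
     Lp_norm (dual_measure M) p (\<lambda>\<xi>. ennreal (indicator ((\<lambda>x. real_of_int n + x) ` Q1) \<xi> * cmod (fh \<xi>)))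
     * ennreal (jbr n powr s)"

definition wnorm :: "manifold \<Rightarrow> ennreal \<Rightarrow> ennreal \<Rightarrow> real \<Rightarrow> (real \<Rightarrow> complex) \<Rightarrow> ennreal" where
  "wnorm M p q s fh = Lp_norm (count_space (UNIV :: int set)) q (wpiece M p s fh)"

definition I_N :: "real \<Rightarrow> real set" where
  "I_N N = {-N-1..-N+1} \<union> {N-1..N+1}"

definition phi0_hat :: "real \<Rightarrow> real \<Rightarrow> real \<Rightarrow> complex" where
  "phi0_hat R N \<xi> = complex_of_real (R * indicator (I_N N) \<xi>)"

end

theory Submission
  imports Defs "HOL-Probability.Characteristic_Functions"
begin

text \<open>At an output frequency \<xi> near 1 the bilinear term collects the interactions of
  \<eta> \<approx> N + 1 with \<xi> - \<eta> \<approx> -N, both in the support I_N of the datum. Its Fourier transform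
  at \<xi> is -(i/2) \<phi>(\<xi>) \<kappa> times the time integral over [0, T] of exp(i (T - \<tau>) \<phi>(\<xi>)) F(\<tau>),
  where F(\<tau>) integrates exp(i \<tau> (\<phi>(\<xi> - \<eta>) + \<phi>(\<eta>))) against the weight
  R^2 \<chi>(\<xi> - \<eta>) \<chi>(\<eta>) \<ge> 0. Since |\<phi>| \<le> 1/2 the phases are bounded, so F is Lipschitz and
  F(0), the mass of the weight, is at least R^2/2; for T \<le> 1/3 the time integral therefore
  cannot cancel and is at least T F(0) / 2. With \<phi> \<ge> 2/5 on [1/2, 3/2] this gives
  |F U_2(T)| \<ge> R^2 T / 160 on a set of measure at least 1 inside 1 + Q_1, which bounds
  every L^p norm there, hence the piece n = 1 of the amalgam norm.\<close>

lemma norm_iexp_diff_le: "cmod (iexp a - iexp b) \<le> \<bar>a - b\<bar>"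
proof -
  have "iexp a - iexp b = iexp b * (iexp (a - b) - 1)"
    by (simp add: algebra_simps flip: exp_add)
  then show ?thesis
    using iexp_approx1[of "a - b" 0] by (simp add: norm_mult)
qed

lemma ennpow_mono: "x \<le> y \<Longrightarrow> 0 \<le> r \<Longrightarrow> ennpow x r \<le> ennpow y r"
  unfolding ennpow_def
  by (auto intro!: ennreal_leI powr_mono2 enn2real_mono simp: top_unique less_top)

lemma ennpow_ennpow_inverse: "0 < r \<Longrightarrow> ennpow (ennpow x r) (1 / r) = x"
  by (cases "x = \<infinity>") (auto simp: ennpow_def powr_powr less_top)

lemma Lp_norm_ge_const:
  assumes p: "0 < p" and S: "S \<in> sets \<mu>" "1 \<le> emeasure \<mu> S"
    and f: "\<And>x. x \<in> S \<Longrightarrow> C \<le> f x"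
  shows "C \<le> Lp_norm \<mu> p f"
proof (cases "p = \<infinity>")
  case True
  show ?thesis
  proof (rule ccontr)
    assume "\<not> C \<le> Lp_norm \<mu> p f"
    then have less: "esssup \<mu> f < C"
      using True by (simp add: Lp_norm_def not_le)
    have "AE x in \<mu>. x \<notin> S"
      using esssup_AE[of f \<mu>] by eventually_elim (use f less in \<open>force dest: order.strict_trans1\<close>)
    then have "emeasure \<mu> S = 0"
      using S(1) sets.sets_into_space[OF S(1)] by (subst (asm) AE_iff_measurable[OF S(1)]) auto
    with S(2) show False by simp
  qed
next
  case False
  define r where "r = enn2real p"
  have r: "0 < r"
    using p False by (simp add: r_def enn2real_positive_iff less_top)
  have "ennpow C r \<le> ennpow C r * emeasure \<mu> S"
    using S(2) by (metis mult.right_neutral mult_left_mono zero_le)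
  also have "\<dots> = (\<integral>\<^sup>+x. ennpow C r * indicator S x \<partial>\<mu>)"
    using S(1) by (simp add: nn_integral_cmult_indicator)
  also have "\<dots> \<le> (\<integral>\<^sup>+x. ennpow (f x) r \<partial>\<mu>)"
    using r by (intro nn_integral_mono) (auto simp: indicator_def intro!: ennpow_mono f)
  finally have "ennpow (ennpow C r) (1 / r) \<le> ennpow (\<integral>\<^sup>+x. ennpow (f x) r \<partial>\<mu>) (1 / r)"
    using r by (intro ennpow_mono) auto
  then show ?thesis
    using r False by (simp add: ennpow_ennpow_inverse Lp_norm_def r_def)
qed

lemma norm_phase_integral_le:
  fixes w \<psi> :: "'a \<Rightarrow> real"
  assumes "\<And>x. 0 \<le> w x"
  shows "norm (\<integral>x. iexp (\<tau> * \<psi> x) * of_real (w x) \<partial>\<mu>) \<le> integral\<^sup>L \<mu> w"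
  using integral_norm_bound[of \<mu> "\<lambda>x. iexp (\<tau> * \<psi> x) * of_real (w x)"] assms
  by (simp add: norm_mult)

lemma lipschitz_on_phase_integral:
  fixes w \<psi> :: "'a \<Rightarrow> real"
  assumes w: "integrable \<mu> w" "\<And>x. 0 \<le> w x"
    and \<psi>: "\<psi> \<in> borel_measurable \<mu>" "\<And>x. \<bar>\<psi> x\<bar> \<le> B"
  shows "(B * integral\<^sup>L \<mu> w)-lipschitz_on UNIV (\<lambda>\<tau>. \<integral>x. iexp (\<tau> * \<psi> x) * of_real (w x) \<partial>\<mu>)"
proof (rule lipschitz_onI)
  let ?g = "\<lambda>\<tau> x. iexp (\<tau> * \<psi> x) * of_real (w x)"
  have "0 \<le> B"
    using \<psi>(2) abs_ge_zero order.trans by blast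
  then show "0 \<le> B * integral\<^sup>L \<mu> w"
    using w(2) by (simp add: integral_nonneg)
  have integrable: "integrable \<mu> (?g \<tau>)" for \<tau>
  proof (rule Bochner_Integration.integrable_bound[OF w(1)])
    show "?g \<tau> \<in> borel_measurable \<mu>"
      using \<psi>(1) borel_measurable_integrable[OF w(1)] by measurable
  qed (simp add: norm_mult)
  fix \<tau> \<sigma> :: real
  have "dist (integral\<^sup>L \<mu> (?g \<tau>)) (integral\<^sup>L \<mu> (?g \<sigma>)) = norm (\<integral>x. ?g \<tau> x - ?g \<sigma> x \<partial>\<mu>)"
    using integrable by (simp add: dist_norm)
  also have "\<dots> \<le> (\<integral>x. norm (?g \<tau> x - ?g \<sigma> x) \<partial>\<mu>)"
    by (rule integral_norm_bound)
  also have "\<dots> \<le> (\<integral>x. B * dist \<tau> \<sigma> * w x \<partial>\<mu>)"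
  proof (rule integral_mono)
    fix x
    have "norm (?g \<tau> x - ?g \<sigma> x) = cmod (iexp (\<tau> * \<psi> x) - iexp (\<sigma> * \<psi> x)) * w x"
      using w(2)[of x] by (simp add: norm_mult flip: left_diff_distrib)
    also have "\<dots> \<le> \<bar>\<tau> * \<psi> x - \<sigma> * \<psi> x\<bar> * w x"
      using w(2) by (intro mult_right_mono norm_iexp_diff_le) auto
    also have "\<bar>\<tau> * \<psi> x - \<sigma> * \<psi> x\<bar> = dist \<tau> \<sigma> * \<bar>\<psi> x\<bar>"
      by (simp add: dist_real_def abs_mult flip: left_diff_distrib)
    also have "\<dots> * w x \<le> B * dist \<tau> \<sigma> * w x"
      using w(2)[of x] \<psi>(2)[of x] by (simp add: mult.commute[of B] mult_right_mono mult_left_mono)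
    finally show "norm (?g \<tau> x - ?g \<sigma> x) \<le> B * dist \<tau> \<sigma> * w x" .
  qed (use integrable w(1) in auto)
  also have "\<dots> = B * integral\<^sup>L \<mu> w * dist \<tau> \<sigma>"
    by (simp add: mult_ac)
  finally show "dist (integral\<^sup>L \<mu> (?g \<tau>)) (integral\<^sup>L \<mu> (?g \<sigma>)) \<le> B * integral\<^sup>L \<mu> w * dist \<tau> \<sigma>" .
qed

lemma norm_duhamel_integral_diff_le:
  fixes g :: "real \<Rightarrow> complex"
  assumes lip: "L-lipschitz_on {0..T} g" and bound: "\<And>\<tau>. \<tau> \<in> {0..T} \<Longrightarrow> norm (g \<tau>) \<le> K"
    and T: "0 \<le> T"
  shows "norm ((LBINT \<tau>=0..T. iexp ((T - \<tau>) * a) * g \<tau>) - of_real T * g 0) \<le> (K * \<bar>a\<bar> + L) * T\<^sup>2"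
proof -
  let ?h = "\<lambda>\<tau>. iexp ((T - \<tau>) * a) * g \<tau>"
  have cont_g: "continuous_on {0..T} g"
    by (rule lipschitz_on_continuous_on[OF lip])
  have cont: "continuous_on {0..T} ?h"
    by (intro continuous_intros cont_g)
  have "(LBINT \<tau>=0..T. ?h \<tau>) = (LBINT \<tau>=ereal 0..ereal T. ?h \<tau>)"
    by (simp add: zero_ereal_def)
  also have "\<dots> = integral {0..T} ?h"
    using T cont by (intro interval_integral_eq_integral borel_integrable_atLeastAtMost')
  also have "\<dots> = integral {0..T} (\<lambda>\<tau>. ?h \<tau> - g 0) + of_real T * g 0"
    using T
    by (subst integral_diff[OF integrable_continuous_interval[OF cont] integrable_const_ivl])
       (simp add: scaleR_conv_of_real)
  finally have "(LBINT \<tau>=0..T. ?h \<tau>) - of_real T * g 0 = integral {0..T} (\<lambda>\<tau>. ?h \<tau> - g 0)"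
    by simp
  also have "norm \<dots> \<le> ((K * \<bar>a\<bar> + L) * T) * (T - 0)"
  proof (rule integral_bound[OF T])
    show "continuous_on {0..T} (\<lambda>\<tau>. ?h \<tau> - g 0)"
      by (intro continuous_intros cont_g)
    fix \<tau> assume \<tau>: "\<tau> \<in> {0..T}"
    have K: "0 \<le> K"
      using bound[OF \<tau>] norm_ge_zero order.trans by blast
    have "?h \<tau> - g 0 = (iexp ((T - \<tau>) * a) - iexp 0) * g \<tau> + (g \<tau> - g 0)"
      by (simp add: algebra_simps)
    also have "norm \<dots> \<le> \<bar>(T - \<tau> - 0) * a\<bar> * K + L * dist \<tau> 0"
      using \<tau> T lipschitz_onD[OF lip, of \<tau> 0] norm_iexp_diff_le[of "(T - \<tau>) * a" 0] bound[OF \<tau>]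
      by (intro norm_triangle_le add_mono) (auto simp: norm_mult dist_norm intro!: mult_mono)
    also have "\<dots> \<le> T * \<bar>a\<bar> * K + L * T"
    proof -
      have "\<bar>(T - \<tau> - 0) * a\<bar> \<le> T * \<bar>a\<bar>"
        using \<tau> by (simp add: abs_mult mult_right_mono)
      then show ?thesis
        using \<tau> K lipschitz_on_nonneg[OF lip]
        by (intro add_mono mult_right_mono mult_left_mono) (auto simp: dist_real_def)
    qed
    finally show "norm (?h \<tau> - g 0) \<le> (K * \<bar>a\<bar> + L) * T"
      by (simp add: algebra_simps)
  qed
  finally show ?thesis
    by (simp add: power2_eq_square mult_ac)
qed

lemma norm_duhamel_integral_ge:
  fixes g :: "real \<Rightarrow> complex"
  assumes lip: "K-lipschitz_on {0..T} g" and bound: "\<And>\<tau>. \<tau> \<in> {0..T} \<Longrightarrow> norm (g \<tau>) \<le> K"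
    and g0: "g 0 = of_real K" and a: "\<bar>a\<bar> \<le> 1 / 2" and T: "0 \<le> T" "T \<le> 1 / 3"
  shows "K * T / 2 \<le> norm (LBINT \<tau>=0..T. iexp ((T - \<tau>) * a) * g \<tau>)"
proof -
  define D where "D = (LBINT \<tau>=0..T. iexp ((T - \<tau>) * a) * g \<tau>)"
  have K: "0 \<le> K"
    using lipschitz_on_nonneg[OF lip] .
  have "norm (D - of_real T * of_real K) \<le> (K * \<bar>a\<bar> + K) * T\<^sup>2"
    unfolding D_def g0[symmetric] by (rule norm_duhamel_integral_diff_le[OF lip bound T(1)])
  also have "\<dots> \<le> (3 / 2 * K) * T\<^sup>2"
    using mult_left_mono[OF a K] by (intro mult_right_mono) auto
  also have "\<dots> = (3 / 2 * K * T) * T"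
    by (simp add: power2_eq_square)
  also have "\<dots> \<le> (3 / 2 * K * T) * (1 / 3)"
    using K T by (intro mult_left_mono) auto
  finally show ?thesis
    using norm_triangle_ineq2[of "of_real T * of_real K" D] K T
    by (simp add: D_def norm_minus_commute norm_mult mult.commute)
qed

lemma symb_abs_le: "\<bar>symb x\<bar> \<le> 1 / 2"
proof -
  have "2 * \<bar>x\<bar> \<le> 1 + x\<^sup>2"
    using zero_le_power2[of "\<bar>x\<bar> - 1"] by (simp add: power2_diff)
  then show ?thesis
    by (simp add: symb_def abs_divide add_pos_nonneg)
qed

lemma symb_ge:
  assumes "1 / 2 \<le> x" "x \<le> 2"
  shows "2 / 5 \<le> symb x"
proof -
  have "0 \<le> (2 * x - 1) * (2 - x)"
    using assms by simp
  then show ?thesis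
    by (simp add: symb_def field_simps add_pos_nonneg algebra_simps power2_eq_square)
qed

lemma borel_measurable_symb [measurable]: "symb \<in> borel_measurable borel"
  unfolding symb_def by measurable

lemma norm_conv_const_ge: "1 / 8 \<le> cmod (conv_const M)"
proof (cases M)
  case Line
  have "1 / 8 \<le> 1 / (2 * pi)"
    using pi_less_4 by (simp add: field_simps)
  also have "\<dots> = cmod (conv_const M)"
    using Line by (simp add: conv_const_def norm_divide)
  finally show ?thesis .
qed (simp add: conv_const_def)

lemma borel_measurable_dual_measure:
  "f \<in> borel_measurable borel \<Longrightarrow> f \<in> borel_measurable (dual_measure M)"
  by (cases M) (auto simp: dual_measure_def)

lemma integrable_dual_measure_indicator:
  assumes A: "bounded A" "A \<in> sets borel"
  shows "integrable (dual_measure M) (indicator A :: real \<Rightarrow> real)"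
proof (cases M)
  case Line
  then show ?thesis
    using A emeasure_bounded_finite[OF A(1)] by (simp add: dual_measure_def)
next
  case Torus
  obtain r where "\<And>x. x \<in> A \<Longrightarrow> \<bar>x\<bar> \<le> r"
    using A(1) by (auto simp: bounded_real)
  then have "finite (A \<inter> \<int>)"
    by (intro finite_subset[OF _ finite_abs_int_segment[of r]]) auto
  then have "integrable (count_space \<int>) (indicator (A \<inter> \<int>) :: real \<Rightarrow> real)"
    by (intro integrable_real_indicator) (auto simp: emeasure_count_space_finite of_nat_less_top)
  also have "?this \<longleftrightarrow> integrable (count_space \<int>) (indicator A :: real \<Rightarrow> real)"
    by (intro Bochner_Integration.integrable_cong) (auto simp: indicator_def)
  finally show ?thesis
    using Torus by (simp add: dual_measure_def)
qed

lemma U2_hat_eq: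
  "U2_hat M u0h t \<xi> = - (\<i> / 2) * of_real (symb \<xi>) * conv_const M *
     (LBINT \<tau>=0..t. iexp ((t - \<tau>) * symb \<xi>) *
        (\<integral>\<eta>. iexp (\<tau> * (symb (\<xi> - \<eta>) + symb \<eta>)) * (u0h (\<xi> - \<eta>) * u0h \<eta>) \<partial>dual_measure M))"
proof -
  have "U_hat \<tau> u0h (\<xi> - \<eta>) * U_hat \<tau> u0h \<eta>
      = iexp (\<tau> * (symb (\<xi> - \<eta>) + symb \<eta>)) * (u0h (\<xi> - \<eta>) * u0h \<eta>)" for \<tau> \<eta>
    by (simp add: U_hat_def distrib_left exp_add mult_ac)
  then show ?thesis
    by (simp add: U2_hat_def N_hat_def dual_conv_def mult_ac)
qed

definition low_window :: "manifold \<Rightarrow> real set" where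
  "low_window M = (case M of Line \<Rightarrow> {1/2<..3/2} | Torus \<Rightarrow> {1})"

lemma low_window_subset_Icc: "low_window M \<subseteq> {1/2..3/2}"
  by (cases M) (auto simp: low_window_def)

lemma low_window_subset_Q1: "low_window M \<subseteq> (\<lambda>x. real_of_int 1 + x) ` Q1"
proof
  fix \<xi> assume "\<xi> \<in> low_window M"
  then have "\<xi> - 1 \<in> Q1"
    by (cases M) (auto simp: low_window_def Q1_def)
  then show "\<xi> \<in> (\<lambda>x. real_of_int 1 + x) ` Q1"
    by (intro image_eqI[of _ _ "\<xi> - 1"]) auto
qed

lemma sets_low_window: "low_window M \<in> sets (dual_measure M)"
  by (cases M) (auto simp: low_window_def dual_measure_def)

lemma emeasure_low_window: "1 \<le> emeasure (dual_measure M) (low_window M)"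
  by (cases M) (auto simp: low_window_def dual_measure_def)

lemma integrable_I_N_convolution:
  "integrable (dual_measure M) (\<lambda>\<eta>. indicator (I_N N) (\<xi> - \<eta>) * indicator (I_N N) \<eta> :: real)"
proof (rule Bochner_Integration.integrable_bound)
  have "bounded (I_N N)"
    by (simp add: I_N_def)
  then show "integrable (dual_measure M) (indicator (I_N N) :: real \<Rightarrow> real)"
    by (intro integrable_dual_measure_indicator) (auto simp: I_N_def)
  show "(\<lambda>\<eta>. indicator (I_N N) (\<xi> - \<eta>) * indicator (I_N N) \<eta> :: real) \<in> borel_measurable (dual_measure M)"
    by (intro borel_measurable_dual_measure) (simp add: I_N_def)
qed (simp add: indicator_def)

lemma I_N_convolution_ge:
  fixes N :: nat
  assumes \<xi>: "\<xi> \<in> low_window M"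
  shows "1 / 2 \<le> (\<integral>\<eta>. indicator (I_N N) (\<xi> - \<eta>) * indicator (I_N N) \<eta> \<partial>dual_measure M :: real)"
proof -
  obtain E where E: "E \<in> sets (dual_measure M)" "emeasure (dual_measure M) E < \<infinity>"
      "1 / 2 \<le> measure (dual_measure M) E"
    and pairs: "\<And>\<eta>. \<eta> \<in> E \<Longrightarrow> \<xi> - \<eta> \<in> I_N N \<and> \<eta> \<in> I_N N"
  proof (cases M)
    case Line
    then show ?thesis
      using \<xi> by (intro that[of "{N + 1/2..N + 1}"])
        (auto simp: dual_measure_def low_window_def I_N_def less_top[symmetric])
  next
    case Torus
    have "real N + 1 \<in> \<int>"
      by (metis Ints_of_nat of_nat_Suc add.commute)
    then show ?thesis
      using \<xi> Torus by (intro that[of "{N + 1}"]) (auto simp: dual_measure_def low_window_def I_N_def)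
  qed
  have "measure (dual_measure M) E = (\<integral>\<eta>. indicator E \<eta> \<partial>dual_measure M)"
    using E by simp
  also have "\<dots> \<le> (\<integral>\<eta>. indicator (I_N N) (\<xi> - \<eta>) * indicator (I_N N) \<eta> \<partial>dual_measure M)"
    using E pairs by (intro integral_mono integrable_I_N_convolution integrable_real_indicator)
      (auto simp: indicator_def)
  finally show ?thesis
    using E(3) by linarith
qed

lemma norm_U2_hat_phi0_ge:
  fixes N :: nat
  assumes \<xi>: "\<xi> \<in> low_window M" and T: "0 < T" "T \<le> 1 / 3"
  shows "R\<^sup>2 * T / 160 \<le> cmod (U2_hat M (phi0_hat R (real N)) T \<xi>)"
proof -
  define w where "w = (\<lambda>\<eta>. R\<^sup>2 * (indicator (I_N N) (\<xi> - \<eta>) * indicator (I_N N) \<eta> :: real))"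
  define A where "A = integral\<^sup>L (dual_measure M) w"
  define F where "F \<tau> = (\<integral>\<eta>. iexp (\<tau> * (symb (\<xi> - \<eta>) + symb \<eta>)) * of_real (w \<eta>) \<partial>dual_measure M)"
    for \<tau>
  define D where "D = (LBINT \<tau>=0..T. iexp ((T - \<tau>) * symb \<xi>) * F \<tau>)"
  have w: "integrable (dual_measure M) w" "\<And>\<eta>. 0 \<le> w \<eta>"
    unfolding w_def by (intro integrable_mult_right integrable_I_N_convolution) simp
  have A: "R\<^sup>2 / 2 \<le> A"
    using I_N_convolution_ge[OF \<xi>, of N] mult_left_mono[of "1/2" _ "R\<^sup>2"]
    by (simp add: A_def w_def)
  then have A0: "0 \<le> A"
    using zero_le_power2[of R] by linarith
  have phase: "\<bar>symb (\<xi> - \<eta>) + symb \<eta>\<bar> \<le> 1" for \<eta>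
    using symb_abs_le[of "\<xi> - \<eta>"] symb_abs_le[of \<eta>] by linarith
  have "(1 * A)-lipschitz_on UNIV F"
    unfolding A_def F_def
    by (intro lipschitz_on_phase_integral w borel_measurable_dual_measure phase) measurable
  moreover have "norm (F \<tau>) \<le> A" for \<tau>
    unfolding F_def A_def by (rule norm_phase_integral_le[OF w(2)])
  moreover have "F 0 = of_real A"
    by (simp add: F_def A_def)
  ultimately have D: "A * T / 2 \<le> norm D"
    unfolding D_def using T symb_abs_le[of \<xi>]
    by (intro norm_duhamel_integral_ge) (auto intro: lipschitz_on_subset)
  have "U2_hat M (phi0_hat R (real N)) T \<xi> = - (\<i> / 2) * of_real (symb \<xi>) * conv_const M * D"
    by (simp add: U2_hat_eq D_def F_def w_def phi0_hat_def power2_eq_square mult_ac)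
  then have "cmod (U2_hat M (phi0_hat R (real N)) T \<xi>) = \<bar>symb \<xi>\<bar> * cmod (conv_const M) * norm D / 2"
    by (simp add: norm_mult norm_divide)
  moreover have "R\<^sup>2 * T / 160 \<le> 2 / 5 * (1 / 8) * (A * T / 2) / 2"
    using A T by simp
  moreover have "2 / 5 \<le> \<bar>symb \<xi>\<bar>"
    using low_window_subset_Icc[of M] \<xi> symb_ge[of \<xi>] by auto
  then have "2 / 5 * (1 / 8) * (A * T / 2) \<le> \<bar>symb \<xi>\<bar> * cmod (conv_const M) * norm D"
    using norm_conv_const_ge[of M] D A0 T
    by (intro mult_mono) auto
  ultimately show ?thesis
    by linarith
qed

lemma wpiece_le_wnorm: "0 < q \<Longrightarrow> wpiece M p s fh n \<le> wnorm M p q s fh"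
  unfolding wnorm_def by (rule Lp_norm_ge_const[of q "{n}"]) auto

lemma wpiece_one_U2_hat_phi0_ge:
  fixes N :: nat
  assumes p: "0 < p" and T: "0 < T" "T \<le> 1 / 3"
  shows "ennreal (jbr 1 powr s / 160 * R\<^sup>2 * T) \<le> wpiece M p s (U2_hat M (phi0_hat R (real N)) T) 1"
proof -
  have "ennreal (R\<^sup>2 * T / 160)
      \<le> Lp_norm (dual_measure M) p
           (\<lambda>\<xi>. ennreal (indicator ((\<lambda>x. real_of_int 1 + x) ` Q1) \<xi> * cmod (U2_hat M (phi0_hat R (real N)) T \<xi>)))"
  proof (rule Lp_norm_ge_const[OF p sets_low_window emeasure_low_window])
    fix \<xi> assume \<xi>: "\<xi> \<in> low_window M"
    then have "\<xi> \<in> (\<lambda>x. real_of_int 1 + x) ` Q1"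
      using low_window_subset_Q1 by blast
    then have "indicator ((\<lambda>x. real_of_int 1 + x) ` Q1) \<xi> = (1 :: real)"
      by simp
    then show "ennreal (R\<^sup>2 * T / 160)
        \<le> ennreal (indicator ((\<lambda>x. real_of_int 1 + x) ` Q1) \<xi> * cmod (U2_hat M (phi0_hat R (real N)) T \<xi>))"
      using norm_U2_hat_phi0_ge[OF \<xi> T] by (simp add: ennreal_leI)
  qed
  then have "ennreal (R\<^sup>2 * T / 160) * ennreal (jbr 1 powr s) \<le> wpiece M p s (U2_hat M (phi0_hat R (real N)) T) 1"
    unfolding wpiece_def by (rule mult_right_mono) simp
  then show ?thesis
    using T by (simp add: ennreal_mult[symmetric] mult_ac)
qed

theorem lemma4p3:
  fixes M :: manifold and p q :: ennreal and s :: real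
  assumes "1 \<le> p" and "1 \<le> q"
  shows "\<exists>T0>0. \<exists>N0::nat. N0 \<ge> 2 \<and> (\<exists>c>0. \<forall>N::nat. \<forall>R::real. \<forall>T::real.
           N \<ge> N0 \<longrightarrow> R > 0 \<longrightarrow> 0 < T \<longrightarrow> T \<le> T0 \<longrightarrow>
             wnorm M p q s (U2_hat M (phi0_hat R (real N)) T)
               \<ge> wpiece M p s (U2_hat M (phi0_hat R (real N)) T) 1
           \<and> wpiece M p s (U2_hat M (phi0_hat R (real N)) T) 1 \<ge> ennreal (c * R\<^sup>2 * T))"
proof -
  have "0 < p" "0 < q"
    using assms by (auto simp: less_le_trans[OF zero_less_one])
  moreover have "0 < jbr 1 powr s / 160"
    by (simp add: jbr_def)
  ultimately show ?thesis
    by (intro exI[of _ "1/3"] conjI)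
       (auto intro!: exI[of _ "2::nat"] exI[of _ "jbr 1 powr s / 160"]
         intro: wpiece_le_wnorm wpiece_one_U2_hat_phi0_ge)
qed

end
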